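(* Let $(M,\eta,g,\phi)$ be a contact metric manifold with metric symplectization $(M\times\mathbb{R},\omega,\bar g,J)$, and let $T$ be the O'Neill fundamental tensor of the Riemannian submersion $\pi_2:(M\times\mathbb{R},\bar g)\to(\mathbb{R},dt^2)$. Then for vector fields $X,Y$ on $M$ (tangent to the slices $M\times\{t\}$), (i) $T_XY=-\big(\bar g(X,Y)+\eta_t(X)\eta_t(Y)\big)\partial_t$; (ii) $T_X\partial_t=X+\eta_t(X)\xi_t$.
   Context: A contact metric manifold $(M,\eta,g,\phi)$: $\eta$ a contact form with Reeb field $\xi$, $g$ Riemannian with $g(X,\xi)=\eta(X)$, $\phi$ a $(1,1)$-tensor with $\phi^2=-I+\eta\otimes\xi$, $d\eta(X,Y)=g(X,\phi Y)$. Metric symplectization: $M\times\mathbb{R}$ ($t$ the coordinate) with $\omega=d(e^{2t}\eta)$, $\eta_t=e^{2t}\eta$, $\xi_t=e^{-2t}\xi$, $J$ given by $JX=\phi X$ on $\ker\eta$, $J\xi_t=\partial_t$, $J\partial_t=-\xi_t$, and $\bar g=g_t+dt^2$ with $g_t=e^{2t}g+e^{2t}(e^{2t}-1)\eta\otimes\eta$. For $\pi_2$, the vertical distribution $\mathcal{V}$ is tangent to the slices $M\times\{t\}$ and the horizontal distribution $\mathcal{H}$ is spanned by $\partial_t$. With $\bar\nabla$ the Levi-Civita connection of $\bar g$, $T_{E_1}E_2=\mathcal{H}\bar\nabla_{\mathcal{V}E_1}\mathcal{V}E_2+\mathcal{V}\bar\nabla_{\mathcal{V}E_1}\mathcal{H}E_2$.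 *)

theory Defs
  imports "HOL-Analysis.Analysis"
begin

text \<open>Everything is formulated in a chart: M is an open subset U of a Euclidean
space 'a, tangent vectors are elements of 'a; M x R is U x UNIV inside 'a x real,
with tangent vectors (u, a) :: 'a x real. Tensors are functions of the base point.\<close>

definition dirderiv :: "('a::real_normed_vector \<Rightarrow> 'b::real_normed_vector) \<Rightarrow> 'a \<Rightarrow> 'a \<Rightarrow> 'b" where
  "dirderiv f x u = frechet_derivative f (at x) u"

fun iter_dd :: "'a::real_normed_vector list \<Rightarrow> ('a \<Rightarrow> 'b::real_normed_vector) \<Rightarrow> 'a \<Rightarrow> 'b" where
  "iter_dd [] f = f"
| "iter_dd (u # us) f = (\<lambda>x. dirderiv (iter_dd us f) x u)"

definition smooth_on_chart :: "'a::real_normed_vector set \<Rightarrow> ('a \<Rightarrow> 'b::real_normed_vector) \<Rightarrow> bool" where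
  "smooth_on_chart U f \<longleftrightarrow> (\<forall>us. \<forall>x\<in>U. iter_dd us f differentiable (at x))"

text \<open>Levi-Civita connection of a metric G (G q u v = G_q(u,v)) on an open set, via the
Koszul formula: nabla_X Y = D_X Y + Gamma(X,Y).\<close>
definition christoffel ::
  "('b::real_normed_vector \<Rightarrow> 'b \<Rightarrow> 'b \<Rightarrow> real) \<Rightarrow> 'b \<Rightarrow> 'b \<Rightarrow> 'b \<Rightarrow> 'b" where
  "christoffel G q u v = (THE w. \<forall>z. G q w z =
      (dirderiv (\<lambda>r. G r v z) q u + dirderiv (\<lambda>r. G r u z) q v - dirderiv (\<lambda>r. G r u v) q z) / 2)"

definition levi_civita ::
  "('b::real_normed_vector \<Rightarrow> 'b \<Rightarrow> 'b \<Rightarrow> real) \<Rightarrow> ('b \<Rightarrow> 'b) \<Rightarrow> ('b \<Rightarrow> 'b) \<Rightarrow> 'b \<Rightarrow> 'b" where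
  "levi_civita G X Y q = dirderiv Y q (X q) + christoffel G q (X q) (Y q)"

text \<open>Exterior derivative of a 1-form (convention d eta(X,Y) = 1/2 (X eta Y - Y eta X - eta [X,Y])).\<close>
definition d_form :: "('a::real_normed_vector \<Rightarrow> 'a \<Rightarrow> real) \<Rightarrow> 'a \<Rightarrow> 'a \<Rightarrow> 'a \<Rightarrow> real" where
  "d_form \<eta> p u v = (dirderiv (\<lambda>q. \<eta> q v) p u - dirderiv (\<lambda>q. \<eta> q u) p v) / 2"

text \<open>Value of eta wedge (d eta)^n on 2n+1 vectors (up to a nonzero constant factor).\<close>
definition contact_vol :: "('a::real_normed_vector \<Rightarrow> 'a \<Rightarrow> real) \<Rightarrow> nat \<Rightarrow> 'a \<Rightarrow> (nat \<Rightarrow> 'a) \<Rightarrow> real" where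
  "contact_vol \<eta> n p v = (\<Sum>\<sigma> | \<sigma> permutes {..<2*n+1}.
      of_int (sign \<sigma>) * \<eta> p (v (\<sigma> 0)) *
      (\<Prod>i<n. d_form \<eta> p (v (\<sigma> (2*i+1))) (v (\<sigma> (2*i+2)))))"

definition contact_metric_manifold ::
  "'a::euclidean_space set \<Rightarrow> nat \<Rightarrow> ('a \<Rightarrow> 'a \<Rightarrow> real) \<Rightarrow> ('a \<Rightarrow> 'a) \<Rightarrow>
   ('a \<Rightarrow> 'a \<Rightarrow> 'a \<Rightarrow> real) \<Rightarrow> ('a \<Rightarrow> 'a \<Rightarrow> 'a) \<Rightarrow> bool" where
  "contact_metric_manifold U n \<eta> \<xi> g \<phi> \<longleftrightarrow>
     open U \<and> DIM('a) = 2*n+1 \<and>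
     (\<forall>u. smooth_on_chart U (\<lambda>p. \<eta> p u)) \<and> smooth_on_chart U \<xi> \<and>
     (\<forall>u v. smooth_on_chart U (\<lambda>p. g p u v)) \<and> (\<forall>u. smooth_on_chart U (\<lambda>p. \<phi> p u)) \<and>
     (\<forall>p\<in>U. linear (\<eta> p) \<and> linear (\<phi> p) \<and> bilinear (g p) \<and>
        (\<forall>u v. g p u v = g p v u) \<and> (\<forall>u. u \<noteq> 0 \<longrightarrow> g p u u > 0) \<and>
        (\<exists>v. contact_vol \<eta> n p v \<noteq> 0) \<and>
        \<eta> p (\<xi> p) = 1 \<and> (\<forall>u. d_form \<eta> p (\<xi> p) u = 0) \<and>
        (\<forall>u. g p u (\<xi> p) = \<eta> p u) \<and>
        (\<forall>u. \<phi> p (\<phi> p u) = - u + \<eta> p u *\<^sub>R \<xi> p) \<and>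
        (\<forall>u v. d_form \<eta> p u v = g p u (\<phi> p v)))"

definition sympl_metric :: "('a::real_normed_vector \<Rightarrow> 'a \<Rightarrow> 'a \<Rightarrow> real) \<Rightarrow> ('a \<Rightarrow> 'a \<Rightarrow> real) \<Rightarrow>
    'a \<times> real \<Rightarrow> 'a \<times> real \<Rightarrow> 'a \<times> real \<Rightarrow> real" where
  "sympl_metric g \<eta> q x y = exp (2 * snd q) * g (fst q) (fst x) (fst y)
     + exp (2 * snd q) * (exp (2 * snd q) - 1) * \<eta> (fst q) (fst x) * \<eta> (fst q) (fst y)
     + snd x * snd y"

definition eta_t :: "('a \<Rightarrow> 'a \<Rightarrow> real) \<Rightarrow> 'a \<times> real \<Rightarrow> 'a \<times> real \<Rightarrow> real" where
  "eta_t \<eta> q x = exp (2 * snd q) * \<eta> (fst q) (fst x)"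

definition xi_t :: "('a::real_vector \<Rightarrow> 'a) \<Rightarrow> 'a \<times> real \<Rightarrow> 'a \<times> real" where
  "xi_t \<xi> q = (exp (- 2 * snd q) *\<^sub>R \<xi> (fst q), 0)"

definition dt_field :: "'a \<times> real \<Rightarrow> 'a::zero \<times> real" where
  "dt_field q = (0, 1)"

definition vproj :: "'a::zero \<times> real \<Rightarrow> 'a \<times> real" where "vproj x = (fst x, 0)"
definition hproj :: "'a::zero \<times> real \<Rightarrow> 'a \<times> real" where "hproj x = (0, snd x)"

definition oneill_T :: "(('a \<times> real \<Rightarrow> 'a \<times> real) \<Rightarrow> ('a \<times> real \<Rightarrow> 'a \<times> real) \<Rightarrow> 'a \<times> real \<Rightarrow> 'a \<times> real)
   \<Rightarrow> ('a \<times> real \<Rightarrow> 'a::real_vector \<times> real) \<Rightarrow> ('a \<times> real \<Rightarrow> 'a \<times> real) \<Rightarrow> 'a \<times> real \<Rightarrow> 'a \<times> real" where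
  "oneill_T nab E1 E2 q = hproj (nab (vproj \<circ> E1) (vproj \<circ> E2) q) + vproj (nab (vproj \<circ> E1) (hproj \<circ> E2) q)"

end

theory Submission
  imports Defs
begin

(* The Levi-Civita connection of the chart metric is D_X Y + Gamma(X, Y), with Gamma(X, Y) the
   dual, under the nondegenerate metric, of the Koszul functional. The slices M x {t} are
   orthogonal to the t-direction, so the components of Gamma entering T only see the t-derivative
   of the metric, 2 e^(2t) g + (4 e^(4t) - 2 e^(2t)) eta (x) eta: the t-component of
   Gamma(X, Y) is minus half of it evaluated at (X, Y), and Gamma(X, d/dt) is the dual of half of
   it evaluated at (X, -), namely X + eta(X) xi. *)

lemma dirderiv_eq: "(f has_derivative D) (at x) \<Longrightarrow> dirderiv f x u = D u"
  unfolding dirderiv_def by (metis frechet_derivative_at)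

lemma dirderiv_locally_const:
  assumes "open S" "q \<in> S" "\<And>r. r \<in> S \<Longrightarrow> f r = c"
  shows "dirderiv f q h = 0"
proof -
  have "(f has_derivative (\<lambda>_. 0)) (at q)"
    by (rule has_derivative_transform_within_open[OF has_derivative_const assms(1,2)])
       (use assms(3) in auto)
  then show ?thesis by (rule dirderiv_eq)
qed

lemma linear_dirderiv:
  "f differentiable (at q) \<Longrightarrow> linear (dirderiv f q)"
  unfolding dirderiv_def by (meson frechet_derivative_works has_derivative_linear)

lemma linear_dirderiv_linear_family:
  fixes F :: "'b::real_normed_vector \<Rightarrow> 'c::real_vector \<Rightarrow> real"
  assumes S: "open S" "q \<in> S" and lin: "\<And>r. r \<in> S \<Longrightarrow> linear (F r)"
    and diff: "\<And>z. (\<lambda>r. F r z) differentiable (at q)"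
  shows "linear (\<lambda>z. dirderiv (\<lambda>r. F r z) q h)"
proof -
  define D where "D z = frechet_derivative (\<lambda>r. F r z) (at q)" for z
  have D: "((\<lambda>r. F r z) has_derivative D z) (at q)" for z
    unfolding D_def using diff frechet_derivative_works by blast
  have "((\<lambda>r. F r (z1 + z2)) has_derivative (\<lambda>k. D z1 k + D z2 k)) (at q)" for z1 z2
    by (rule has_derivative_transform_within_open[OF has_derivative_add[OF D D] S])
       (use lin in \<open>simp add: linear_add\<close>)
  then have add: "D (z1 + z2) = (\<lambda>k. D z1 k + D z2 k)" for z1 z2
    using D has_derivative_unique by blast
  have "((\<lambda>r. F r (c *\<^sub>R z)) has_derivative (\<lambda>k. c * D z k)) (at q)" for c z
    by (rule has_derivative_transform_within_open[OF has_derivative_mult_right[OF D] S])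
       (use lin in \<open>simp add: linear_scale\<close>)
  then have scale: "D (c *\<^sub>R z) = (\<lambda>k. c * D z k)" for c z
    using D has_derivative_unique by blast
  show ?thesis
    unfolding dirderiv_def D_def[symmetric] linear_iff by (simp add: add scale)
qed

lemma snd_dirderiv_vproj:
  assumes "Y differentiable (at q)"
  shows "snd (dirderiv (vproj \<circ> Y) q h) = 0"
proof -
  obtain D where "(Y has_derivative D) (at q)" using assms differentiable_def by blast
  then have "((vproj \<circ> Y) has_derivative (\<lambda>h. (fst (D h), 0))) (at q)"
    unfolding vproj_def o_def by (intro has_derivative_Pair has_derivative_fst has_derivative_const)
  then show ?thesis by (simp add: dirderiv_eq)
qed

lemma pos_def_form_represents_linear:
  fixes B :: "'b::euclidean_space \<Rightarrow> 'b \<Rightarrow> real"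
  assumes lin_right: "\<And>w. linear (B w)" and lin_left: "\<And>z. linear (\<lambda>w. B w z)"
    and pos: "\<And>w. w \<noteq> 0 \<Longrightarrow> B w w > 0" and L: "linear L"
  shows "\<exists>w. \<forall>z. B w z = L z"
proof -
  define A where "A w = (\<Sum>b\<in>Basis. B w b *\<^sub>R b)" for w
  have A: "A w \<bullet> z = B w z" for w z
  proof -
    have "B w z = B w (\<Sum>b\<in>Basis. (z \<bullet> b) *\<^sub>R b)" by (simp add: euclidean_representation)
    also have "\<dots> = A w \<bullet> z"
      using lin_right[of w]
      by (simp add: A_def linear_sum linear_scale inner_sum_left inner_commute[of z] mult.commute)
    finally show ?thesis by simp
  qed
  have "linear A"
    unfolding linear_iff A_def
    by (simp add: linear_add[OF lin_left] linear_scale[OF lin_left] scaleR_add_left sum.distrib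
        scaleR_sum_right)
  moreover have "inj A"
  proof (rule linear_injective_0[THEN iffD2, OF \<open>linear A\<close>], intro allI impI)
    fix w assume "A w = 0"
    then show "w = 0" using A[of w w] pos[of w] by force
  qed
  ultimately have "surj A" using linear_injective_imp_surjective by blast
  define l where "l = (\<Sum>b\<in>Basis. L b *\<^sub>R b)"
  have "L z = l \<bullet> z" for z
  proof -
    have "L z = L (\<Sum>b\<in>Basis. (z \<bullet> b) *\<^sub>R b)" by (simp add: euclidean_representation)
    then show ?thesis
      using L by (simp add: l_def linear_sum linear_scale inner_sum_left inner_commute[of z] mult.commute)
  qed
  moreover obtain w where "A w = l" using \<open>surj A\<close> by (metis surjD)
  ultimately show ?thesis using A by metis
qed

definition koszul :: "('b::real_normed_vector \<Rightarrow> 'b \<Rightarrow> 'b \<Rightarrow> real) \<Rightarrow> 'b \<Rightarrow> 'b \<Rightarrow> 'b \<Rightarrow> 'b \<Rightarrow> real"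
  where "koszul G q u v z =
    (dirderiv (\<lambda>r. G r v z) q u + dirderiv (\<lambda>r. G r u z) q v - dirderiv (\<lambda>r. G r u v) q z) / 2"

lemma christoffel_eqI:
  assumes lin_left: "\<And>z. linear (\<lambda>w. G q w z)" and pos: "\<And>w. w \<noteq> 0 \<Longrightarrow> G q w w > 0"
    and w: "\<And>z. G q w z = koszul G q u v z"
  shows "christoffel G q u v = w"
  unfolding christoffel_def koszul_def[symmetric]
proof (rule the_equality)
  fix w' assume w': "\<forall>z. G q w' z = koszul G q u v z"
  have "G q (w' - w) z = G q w' z - G q w z" for z
    using linear_diff[OF lin_left[of z]] by simp
  then have "G q (w' - w) (w' - w) = 0" using w w' by simp
  then show "w' = w" using pos[of "w' - w"] by fastforce
qed (use w in simp)

lemma christoffel_koszul: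
  fixes G :: "'b::euclidean_space \<Rightarrow> 'b \<Rightarrow> 'b \<Rightarrow> real"
  assumes lin_right: "\<And>w. linear (G q w)" and lin_left: "\<And>z. linear (\<lambda>w. G q w z)"
    and pos: "\<And>w. w \<noteq> 0 \<Longrightarrow> G q w w > 0" and "linear (koszul G q u v)"
  shows "G q (christoffel G q u v) z = koszul G q u v z"
proof -
  obtain w where w: "\<And>z. G q w z = koszul G q u v z"
    using pos_def_form_represents_linear[OF lin_right lin_left pos assms(4)] by blast
  have "christoffel G q u v = w" by (rule christoffel_eqI[where G = G and q = q, OF lin_left pos w])
  then show ?thesis using w by simp
qed

lemma linear_koszul:
  assumes S: "open S" "q \<in> S" and lin: "\<And>r w. r \<in> S \<Longrightarrow> linear (G r w)"
    and diff: "\<And>v z. (\<lambda>r. G r v z) differentiable (at q)"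
  shows "linear (koszul G q u v)"
proof -
  have l1: "linear (\<lambda>z. dirderiv (\<lambda>r. G r v z) q u)"
    and l2: "linear (\<lambda>z. dirderiv (\<lambda>r. G r u z) q v)"
    by (rule linear_dirderiv_linear_family[OF S lin diff]; assumption)+
  have l3: "linear (dirderiv (\<lambda>r. G r u v) q)" by (rule linear_dirderiv[OF diff])
  show ?thesis
    unfolding koszul_def linear_iff
    using linear_add[OF l1] linear_add[OF l2] linear_add[OF l3]
      linear_scale[OF l1] linear_scale[OF l2] linear_scale[OF l3]
    by (simp add: field_simps)
qed

lemma koszul_zero_right:
  assumes S: "open S" "q \<in> S"
    and lin_right: "\<And>r w. r \<in> S \<Longrightarrow> linear (G r w)"
    and lin_left: "\<And>r z. r \<in> S \<Longrightarrow> linear (\<lambda>w. G r w z)"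
    and diff: "(\<lambda>r. G r u z) differentiable (at q)"
  shows "koszul G q u 0 z = 0"
proof -
  have "dirderiv (\<lambda>r. G r 0 z) q u = 0"
    by (rule dirderiv_locally_const[OF S]) (use linear_0[OF lin_left] in auto)
  moreover have "dirderiv (\<lambda>r. G r u 0) q z = 0"
    by (rule dirderiv_locally_const[OF S]) (use linear_0[OF lin_right] in auto)
  moreover have "dirderiv (\<lambda>r. G r u z) q 0 = 0"
    by (rule linear_0[OF linear_dirderiv[OF diff]])
  ultimately show ?thesis unfolding koszul_def by simp
qed

locale metric_sympl_chart =
  fixes U :: "'a::euclidean_space set" and \<eta> :: "'a \<Rightarrow> 'a \<Rightarrow> real" and \<xi> :: "'a \<Rightarrow> 'a"
    and g :: "'a \<Rightarrow> 'a \<Rightarrow> 'a \<Rightarrow> real"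
  assumes open_U: "open U"
    and eta_linear: "p \<in> U \<Longrightarrow> linear (\<eta> p)"
    and g_bilinear: "p \<in> U \<Longrightarrow> bilinear (g p)"
    and g_sym: "p \<in> U \<Longrightarrow> g p u v = g p v u"
    and g_pos: "p \<in> U \<Longrightarrow> u \<noteq> 0 \<Longrightarrow> g p u u > 0"
    and g_xi: "p \<in> U \<Longrightarrow> g p u (\<xi> p) = \<eta> p u"
    and eta_xi: "p \<in> U \<Longrightarrow> \<eta> p (\<xi> p) = 1"
    and eta_differentiable: "p \<in> U \<Longrightarrow> (\<lambda>p. \<eta> p u) differentiable (at p)"
    and g_differentiable: "p \<in> U \<Longrightarrow> (\<lambda>p. g p u v) differentiable (at p)"
begin

lemma sympl_metric_linear_right: "fst r \<in> U \<Longrightarrow> linear (sympl_metric g \<eta> r x)"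
  using eta_linear[of "fst r"] g_bilinear[of "fst r"] unfolding linear_iff sympl_metric_def
  by (auto simp: bilinear_radd bilinear_rmul algebra_simps)

lemma sympl_metric_linear_left: "fst r \<in> U \<Longrightarrow> linear (\<lambda>x. sympl_metric g \<eta> r x y)"
  using eta_linear[of "fst r"] g_bilinear[of "fst r"] unfolding linear_iff sympl_metric_def
  by (auto simp: bilinear_ladd bilinear_lmul algebra_simps)

lemma sympl_metric_dt_right: "fst r \<in> U \<Longrightarrow> sympl_metric g \<eta> r x (0, \<beta>) = snd x * \<beta>"
  using eta_linear[of "fst r"] g_bilinear[of "fst r"]
  by (simp add: sympl_metric_def linear_0 bilinear_rzero)

lemma sympl_metric_dt_left: "fst r \<in> U \<Longrightarrow> sympl_metric g \<eta> r (0, \<alpha>) y = \<alpha> * snd y"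
  using eta_linear[of "fst r"] g_bilinear[of "fst r"]
  by (simp add: sympl_metric_def linear_0 bilinear_lzero)

lemma eta_square_le_g:
  assumes "p \<in> U"
  shows "(\<eta> p a)\<^sup>2 \<le> g p a a"
proof -
  define k where "k = \<eta> p a"
  have "0 \<le> g p (a - k *\<^sub>R \<xi> p) (a - k *\<^sub>R \<xi> p)"
    using g_pos[OF assms] bilinear_lzero[OF g_bilinear[OF assms]]
    by (cases "a - k *\<^sub>R \<xi> p = 0") (auto intro: less_imp_le)
  also have "\<dots> = g p a a - k * g p a (\<xi> p) - k * g p (\<xi> p) a + k * k * g p (\<xi> p) (\<xi> p)"
    using g_bilinear[OF assms]
    by (simp add: bilinear_lsub bilinear_rsub bilinear_lmul bilinear_rmul algebra_simps)
  also have "\<dots> = g p a a - k\<^sup>2"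
    using g_sym[OF assms] g_xi[OF assms] eta_xi[OF assms] by (simp add: k_def power2_eq_square)
  finally show ?thesis by (simp add: k_def)
qed

lemma sympl_metric_pos:
  assumes r: "fst r \<in> U" and "w \<noteq> 0"
  shows "sympl_metric g \<eta> r w w > 0"
proof -
  obtain a s where w: "w = (a, s)" by (cases w)
  define e where "e = exp (2 * snd r)"
  define h where "h = \<eta> (fst r) a"
  have e: "e > 0" by (simp add: e_def)
  have G: "sympl_metric g \<eta> r w w = e * (g (fst r) a a - h\<^sup>2) + e * e * h\<^sup>2 + s * s"
    by (simp add: sympl_metric_def w e_def h_def algebra_simps power2_eq_square)
  show ?thesis
  proof (cases "a = 0")
    case True
    then have "s \<noteq> 0" using \<open>w \<noteq> 0\<close> w by (simp add: zero_prod_def)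
    moreover have "h = 0" "g (fst r) a a = 0"
      using True eta_linear[OF r] g_bilinear[OF r] by (simp_all add: h_def linear_0 bilinear_lzero)
    ultimately show ?thesis by (simp add: G flip: power2_eq_square)
  next
    case False
    then have "g (fst r) a a > 0" using g_pos[OF r] by blast
    moreover have "h\<^sup>2 \<le> g (fst r) a a" unfolding h_def by (rule eta_square_le_g[OF r])
    ultimately have "e * (g (fst r) a a - h\<^sup>2) + e * e * h\<^sup>2 > 0"
      using e by (cases "h = 0") (auto intro: add_nonneg_pos add_pos_nonneg)
    then show ?thesis by (simp add: G add_pos_nonneg)
  qed
qed

lemma sympl_metric_has_derivative:
  assumes "fst q \<in> U"
  shows "\<exists>D. ((\<lambda>r. sympl_metric g \<eta> r x y) has_derivative D) (at q) \<and>
    D (0, 1) = 2 * exp (2 * snd q) * g (fst q) (fst x) (fst y)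
      + (4 * exp (2 * snd q) ^ 2 - 2 * exp (2 * snd q)) * \<eta> (fst q) (fst x) * \<eta> (fst q) (fst y)"
proof -
  obtain Dg Da Db where
        Dg: "((\<lambda>p. g p (fst x) (fst y)) has_derivative Dg) (at (fst q))"
    and Da: "((\<lambda>p. \<eta> p (fst x)) has_derivative Da) (at (fst q))"
    and Db: "((\<lambda>p. \<eta> p (fst y)) has_derivative Db) (at (fst q))"
    using g_differentiable[OF assms] eta_differentiable[OF assms] unfolding differentiable_def
    by metis
  have fst: "(fst has_derivative fst) (at q)"
    by (rule bounded_linear_imp_has_derivative[OF bounded_linear_fst])
  note chain = has_derivative_compose[OF fst, unfolded o_def]
  define e where "e = exp (2 * snd q)"
  have exp: "((\<lambda>r. exp (2 * snd r)) has_derivative (\<lambda>h. e * (2 * snd h))) (at q)"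
    unfolding e_def by (auto intro!: derivative_eq_intros)
  define D where "D h = 2 * snd h * (e * g (fst q) (fst x) (fst y)
      + (2 * e\<^sup>2 - e) * \<eta> (fst q) (fst x) * \<eta> (fst q) (fst y))
    + e * Dg (fst h) + e * (e - 1) * (Da (fst h) * \<eta> (fst q) (fst y) + \<eta> (fst q) (fst x) * Db (fst h))"
    for h
  have "((\<lambda>r. sympl_metric g \<eta> r x y) has_derivative D) (at q)"
    unfolding sympl_metric_def
    by (rule has_derivative_eq_rhs,
        (rule has_derivative_add has_derivative_mult has_derivative_diff has_derivative_const
          exp chain[OF Dg] chain[OF Da] chain[OF Db])+)
       (simp add: D_def e_def fun_eq_iff power2_eq_square algebra_simps)
  moreover have "Dg 0 = 0" "Da 0 = 0" "Db 0 = 0"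
    using Dg Da Db has_derivative_linear linear_0 by blast+
  ultimately show ?thesis
    by (intro exI[of _ D]) (simp add: D_def e_def algebra_simps power2_eq_square)
qed

lemma sympl_metric_differentiable:
  "fst q \<in> U \<Longrightarrow> (\<lambda>r. sympl_metric g \<eta> r x y) differentiable (at q)"
  using sympl_metric_has_derivative differentiable_def by blast

lemma sympl_metric_dirderiv_dt:
  "fst q \<in> U \<Longrightarrow> dirderiv (\<lambda>r. sympl_metric g \<eta> r x y) q (0, 1) =
    2 * exp (2 * snd q) * g (fst q) (fst x) (fst y)
      + (4 * exp (2 * snd q) ^ 2 - 2 * exp (2 * snd q)) * \<eta> (fst q) (fst x) * \<eta> (fst q) (fst y)"
  using sympl_metric_has_derivative dirderiv_eq by metis

lemma open_chart: "open (U \<times> (UNIV :: real set))"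
  using open_U by (simp add: open_Times)

lemma christoffel_sympl_metric_eqI:
  assumes "q \<in> U \<times> UNIV" "\<And>z. sympl_metric g \<eta> q w z = koszul (sympl_metric g \<eta>) q u v z"
  shows "christoffel (sympl_metric g \<eta>) q u v = w"
  using assms by (intro christoffel_eqI) (auto simp: sympl_metric_linear_left sympl_metric_pos)

lemma sympl_metric_christoffel:
  assumes "q \<in> U \<times> UNIV"
  shows "sympl_metric g \<eta> q (christoffel (sympl_metric g \<eta>) q u v) z =
    koszul (sympl_metric g \<eta>) q u v z"
  using assms
  by (intro christoffel_koszul linear_koszul[OF open_chart])
     (auto simp: sympl_metric_linear_left sympl_metric_linear_right sympl_metric_pos
       sympl_metric_differentiable)

lemma christoffel_sympl_metric_zero_right:
  assumes q: "q \<in> U \<times> UNIV"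
  shows "christoffel (sympl_metric g \<eta>) q u 0 = 0"
proof (rule christoffel_sympl_metric_eqI[OF q])
  fix z
  have "koszul (sympl_metric g \<eta>) q u 0 z = 0"
    using q by (intro koszul_zero_right[OF open_chart])
      (auto simp: sympl_metric_linear_left sympl_metric_linear_right sympl_metric_differentiable)
  moreover have "sympl_metric g \<eta> q 0 z = 0"
    using q linear_0[OF sympl_metric_linear_left[of q]] by (simp add: mem_Times_iff)
  ultimately show "sympl_metric g \<eta> q 0 z = koszul (sympl_metric g \<eta>) q u 0 z" by simp
qed

lemma snd_christoffel_vertical:
  assumes q: "q \<in> U \<times> UNIV"
  shows "snd (christoffel (sympl_metric g \<eta>) q (a, 0) (b, 0)) =
    - (sympl_metric g \<eta> q (a, 0) (b, 0) + eta_t \<eta> q (a, 0) * eta_t \<eta> q (b, 0))"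
proof -
  let ?G = "sympl_metric g \<eta>"
  have dt_orth: "?G r (c, 0) (0, 1) = 0" if "r \<in> U \<times> UNIV" for r c
    using that by (simp add: sympl_metric_dt_right mem_Times_iff)
  have "snd (christoffel ?G q (a, 0) (b, 0)) = ?G q (christoffel ?G q (a, 0) (b, 0)) (0, 1)"
    using q by (simp add: sympl_metric_dt_right mem_Times_iff)
  also have "\<dots> = koszul ?G q (a, 0) (b, 0) (0, 1)"
    by (rule sympl_metric_christoffel[OF q])
  also have "\<dots> = - dirderiv (\<lambda>r. ?G r (a, 0) (b, 0)) q (0, 1) / 2"
    using dirderiv_locally_const[OF open_chart q dt_orth] by (simp add: koszul_def)
  also have "\<dots> = - (?G q (a, 0) (b, 0) + eta_t \<eta> q (a, 0) * eta_t \<eta> q (b, 0))"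
    using q by (simp add: sympl_metric_dirderiv_dt mem_Times_iff)
      (simp add: sympl_metric_def eta_t_def power2_eq_square algebra_simps)
  finally show ?thesis .
qed

lemma christoffel_vertical_dt:
  assumes q: "q \<in> U \<times> UNIV"
  shows "christoffel (sympl_metric g \<eta>) q (a, 0) (0, 1) = (a, 0) + eta_t \<eta> q (a, 0) *\<^sub>R xi_t \<xi> q"
proof -
  let ?G = "sympl_metric g \<eta>" and ?p = "fst q" and ?e = "exp (2 * snd q)"
  have p: "?p \<in> U" using q by (simp add: mem_Times_iff)
  have "(a, 0) + eta_t \<eta> q (a, 0) *\<^sub>R xi_t \<xi> q = (a + \<eta> ?p a *\<^sub>R \<xi> ?p, 0)"
    by (simp add: eta_t_def xi_t_def mult_exp_exp)
  moreover have "christoffel ?G q (a, 0) (0, 1) = (a + \<eta> ?p a *\<^sub>R \<xi> ?p, 0)"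
  proof (rule christoffel_sympl_metric_eqI[OF q])
    fix z :: "'a \<times> real"
    obtain c s where z: "z = (c, s)" by (cases z)
    have "dirderiv (\<lambda>r. ?G r (0, 1) z) q (a, 0) = 0"
      by (rule dirderiv_locally_const[OF open_chart q, where c = s])
         (simp add: z sympl_metric_dt_left mem_Times_iff)
    moreover have "dirderiv (\<lambda>r. ?G r (a, 0) (0, 1)) q z = 0"
      by (rule dirderiv_locally_const[OF open_chart q, where c = 0])
         (simp add: sympl_metric_dt_right mem_Times_iff)
    moreover have "dirderiv (\<lambda>r. ?G r (a, 0) z) q (0, 1) =
        2 * ?e * g ?p a c + (4 * ?e ^ 2 - 2 * ?e) * \<eta> ?p a * \<eta> ?p c"
      using p by (simp add: sympl_metric_dirderiv_dt z)
    ultimately have "koszul ?G q (a, 0) (0, 1) z = ?e * g ?p a c + (2 * ?e ^ 2 - ?e) * \<eta> ?p a * \<eta> ?p c"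
      unfolding koszul_def by simp
    moreover have "g ?p (\<xi> ?p) c = \<eta> ?p c"
      using g_sym[OF p, of "\<xi> ?p" c] g_xi[OF p] by simp
    then have "g ?p (a + \<eta> ?p a *\<^sub>R \<xi> ?p) c = g ?p a c + \<eta> ?p a * \<eta> ?p c"
      using g_bilinear[OF p] by (simp add: bilinear_ladd bilinear_lmul)
    moreover have "\<eta> ?p (a + \<eta> ?p a *\<^sub>R \<xi> ?p) = 2 * \<eta> ?p a"
      using eta_linear[OF p] eta_xi[OF p] by (simp add: linear_add linear_scale)
    ultimately show "?G q (a + \<eta> ?p a *\<^sub>R \<xi> ?p, 0) z = koszul ?G q (a, 0) (0, 1) z"
      by (simp add: z sympl_metric_def power2_eq_square algebra_simps)
  qed
  ultimately show ?thesis by simp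
qed

lemma oneill_T_vertical_vertical:
  assumes q: "q \<in> U \<times> UNIV" and X: "snd (X q) = 0"
    and Y: "Y differentiable (at q)" "\<forall>r\<in>U \<times> UNIV. snd (Y r) = 0"
  shows "oneill_T (levi_civita (sympl_metric g \<eta>)) X Y q =
    (- (sympl_metric g \<eta> q (X q) (Y q) + eta_t \<eta> q (X q) * eta_t \<eta> q (Y q))) *\<^sub>R dt_field q"
proof -
  obtain a b where a: "X q = (a, 0)" and b: "Y q = (b, 0)"
    using X Y(2) q by (metis prod.collapse)
  have "dirderiv (hproj \<circ> Y) q (a, 0) = 0"
    by (rule dirderiv_locally_const[OF open_chart q, where c = "(0, 0)"])
       (simp add: hproj_def Y(2)[rule_format])
  then show ?thesis
    using snd_dirderiv_vproj[OF Y(1)] snd_christoffel_vertical[OF q, of a b]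
      christoffel_sympl_metric_zero_right[OF q, unfolded zero_prod_def]
    by (simp add: oneill_T_def levi_civita_def vproj_def hproj_def dt_field_def a b)
qed

lemma oneill_T_vertical_dt:
  assumes q: "q \<in> U \<times> UNIV" and X: "snd (X q) = 0"
  shows "oneill_T (levi_civita (sympl_metric g \<eta>)) X dt_field q = X q + eta_t \<eta> q (X q) *\<^sub>R xi_t \<xi> q"
proof -
  obtain a where a: "X q = (a, 0)" using X by (metis prod.collapse)
  have vdt: "vproj \<circ> dt_field = (\<lambda>_. (0, 0))" and hdt: "hproj \<circ> dt_field = (\<lambda>_. (0, 1))"
    by (simp_all add: fun_eq_iff vproj_def hproj_def dt_field_def)
  have const: "dirderiv (\<lambda>_. c) q h = 0" for c :: "'a \<times> real" and h
    by (rule dirderiv_locally_const[of UNIV]) simp_all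
  show ?thesis
    unfolding oneill_T_def levi_civita_def vdt hdt const
    using christoffel_vertical_dt[OF q, of a] christoffel_sympl_metric_zero_right[OF q, unfolded zero_prod_def]
    by (simp add: vproj_def hproj_def a xi_t_def)
qed

end

lemma smooth_on_chart_differentiable:
  "smooth_on_chart S f \<Longrightarrow> x \<in> S \<Longrightarrow> f differentiable (at x)"
  unfolding smooth_on_chart_def by (metis iter_dd.simps(1))

lemma contact_metric_manifold_imp_metric_sympl_chart:
  "contact_metric_manifold U n \<eta> \<xi> g \<phi> \<Longrightarrow> metric_sympl_chart U \<eta> \<xi> g"
  unfolding contact_metric_manifold_def metric_sympl_chart_def
  by (blast intro: smooth_on_chart_differentiable)

theorem lemma4p1:
  fixes U :: "'a::euclidean_space set" and n :: nat
    and \<eta> :: "'a \<Rightarrow> 'a \<Rightarrow> real" and \<xi> :: "'a \<Rightarrow> 'a"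
    and g :: "'a \<Rightarrow> 'a \<Rightarrow> 'a \<Rightarrow> real" and \<phi> :: "'a \<Rightarrow> 'a \<Rightarrow> 'a"
    and X Y :: "'a \<times> real \<Rightarrow> 'a \<times> real"
  assumes cm: "contact_metric_manifold U n \<eta> \<xi> g \<phi>"
    and X: "smooth_on_chart (U \<times> UNIV) X" "\<forall>q\<in>U \<times> UNIV. snd (X q) = 0"
    and Y: "smooth_on_chart (U \<times> UNIV) Y" "\<forall>q\<in>U \<times> UNIV. snd (Y q) = 0"
  shows "\<forall>q\<in>U \<times> UNIV.
           oneill_T (levi_civita (sympl_metric g \<eta>)) X Y q =
             (- (sympl_metric g \<eta> q (X q) (Y q) + eta_t \<eta> q (X q) * eta_t \<eta> q (Y q))) *\<^sub>R dt_field q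
         \<and> oneill_T (levi_civita (sympl_metric g \<eta>)) X dt_field q =
             X q + eta_t \<eta> q (X q) *\<^sub>R xi_t \<xi> q"
proof -
  interpret metric_sympl_chart U \<eta> \<xi> g
    by (rule contact_metric_manifold_imp_metric_sympl_chart[OF cm])
  show ?thesis
    using X Y by (intro ballI conjI oneill_T_vertical_vertical oneill_T_vertical_dt)
      (auto intro: smooth_on_chart_differentiable)
qed

end
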